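(* In the setting of the context, let $\omega\in\overline{\mathbb{C}}\setminus(i\mathbb{R}\cup\{\delta_+,\delta_-,\infty\})$, $\omega=\omega_\Re+i\omega_\Im$. Then $\omega\in W_\Omega(T)$ if and only if $\omega\notin\partial\mathcal{D}$ and $$\hat\beta(\omega):=\frac{-2\omega_\Im\left((-\omega_\Re^2+\omega_\Im^2+d\omega_\Im+c)^2+\omega_\Re^2(2\omega_\Im+d)^2\right)}{d|\omega|^2+2c\omega_\Im}\in\overline{W(B)}$$ and $$\hat\alpha(\omega):=\frac{(2\omega_\Im+d)|\omega|^4}{d|\omega|^2+2c\omega_\Im}\in\overline{W(A)}.$$
   Context: Let $\mathcal{H}$ be a Hilbert space, $A$ a selfadjoint (possibly unbounded) operator in $\mathcal{H}$ and $B$ a nonzero bounded selfadjoint operator. Let $c\ge0$, $d>0$, $\delta_\pm:=\pm\sqrt{c-d^2/4}-id/2$ (principal square root). $W(A),W(B)\subset\mathbb{R}$ are the numerical ranges. For real $\alpha,\beta$ let $p_{(\alpha,\beta)}(\omega):=(\alpha-\omega^2)(c-id\omega-\omega^2)-\beta\omega^2$ with roots $r_1,\dots,r_4$ labelled continuously in $(\alpha,\beta)$ and extended by limits to $\overline{\mathbb{R}}\times\mathbb{R}$ ($\overline{\mathbb{R}}=\mathbb{R}\cup\{\pm\infty\}$), values in $\overline{\mathbb{C}}$. Let $\Omega:=\overline{W(A)}\times\overline{W(B)}$ (closure of $W(A)$ in $\overline{\mathbb{R}}$) and $W_\Omega(T):=\bigcup_{n=1}^4\bigcup_{(\alpha,\beta)\in\Omega}r_n(\alpha,\beta)$.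 Let $\mathcal{D}:=\{\omega\in\mathbb{C}:|\omega+ic/d|<c/d\}$. *)

theory Defs
  imports "HOL-Analysis.Analysis"
begin

definition pquart :: "real \<Rightarrow> real \<Rightarrow> real \<Rightarrow> real \<Rightarrow> complex \<Rightarrow> complex" where
  "pquart c d \<alpha> \<beta> \<omega> =
     (complex_of_real \<alpha> - \<omega>^2) * (complex_of_real c - \<i> * complex_of_real d * \<omega> - \<omega>^2)
     - complex_of_real \<beta> * \<omega>^2"

definition delta_plus :: "real \<Rightarrow> real \<Rightarrow> complex" where
  "delta_plus c d = csqrt (complex_of_real (c - d^2/4)) - \<i> * complex_of_real d / 2"

definition delta_minus :: "real \<Rightarrow> real \<Rightarrow> complex" where
  "delta_minus c d = - csqrt (complex_of_real (c - d^2/4)) - \<i> * complex_of_real d / 2"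

text \<open>Finite values of the roots r_1..r_4 at a point (alpha,beta) of extended-real x real. The value infinity of the extended complex plane is not represented.\<close>
definition root_set :: "real \<Rightarrow> real \<Rightarrow> ereal \<Rightarrow> real \<Rightarrow> complex set" where
  "root_set c d \<alpha> \<beta> = (case \<alpha> of
      ereal a \<Rightarrow> {\<omega>. pquart c d a \<beta> \<omega> = 0}
    | PInfty \<Rightarrow> {z. \<exists>a w. filterlim a at_top sequentially \<and> w \<longlonglongrightarrow> z \<and>
                         (\<forall>k. pquart c d (a k) \<beta> (w k) = 0)}
    | MInfty \<Rightarrow> {z. \<exists>a w. filterlim a at_bot sequentially \<and> w \<longlonglongrightarrow> z \<and>
                         (\<forall>k. pquart c d (a k) \<beta> (w k) = 0)})"

text \<open>W_Omega(T) (its finite part), with Omega = closure of W(A) in the extended reals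
  times closure of W(B).\<close>
definition W_Omega :: "real \<Rightarrow> real \<Rightarrow> real set \<Rightarrow> real set \<Rightarrow> complex set" where
  "W_Omega c d WA WB = (\<Union>\<alpha>\<in>closure (ereal ` WA). \<Union>\<beta>\<in>closure WB. root_set c d \<alpha> \<beta>)"

definition Dset :: "real \<Rightarrow> real \<Rightarrow> complex set" where
  "Dset c d = {\<omega>. cmod (\<omega> + \<i> * complex_of_real (c/d)) < c/d}"

definition hat_beta :: "real \<Rightarrow> real \<Rightarrow> complex \<Rightarrow> real" where
  "hat_beta c d \<omega> =
     (-2 * Im \<omega> * ((- ((Re \<omega>)^2) + (Im \<omega>)^2 + d * Im \<omega> + c)^2 + (Re \<omega>)^2 * (2 * Im \<omega> + d)^2))
     / (d * (cmod \<omega>)^2 + 2 * c * Im \<omega>)"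

definition hat_alpha :: "real \<Rightarrow> real \<Rightarrow> complex \<Rightarrow> real" where
  "hat_alpha c d \<omega> = ((2 * Im \<omega> + d) * (cmod \<omega>)^4) / (d * (cmod \<omega>)^2 + 2 * c * Im \<omega>)"

end

theory Submission
  imports Defs
begin

text \<open>With \<open>q(\<omega>) = c - i d \<omega> - \<omega>\<^sup>2 = -(\<omega> - \<delta>\<^sub>+)(\<omega> - \<delta>\<^sub>-)\<close> the quartic reads
  \<open>p(\<omega>) = \<alpha> q(\<omega>) - \<beta> \<omega>\<^sup>2 - \<omega>\<^sup>2 q(\<omega>)\<close>. For fixed \<open>\<omega>\<close> it is real-linear in \<open>(\<alpha>, \<beta>)\<close>, so
  \<open>p(\<omega>) = 0\<close> is a real \<open>2\<times>2\<close> system with determinant \<open>Im (q(\<omega>) cnj(\<omega>\<^sup>2)) =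
  -Re \<omega> (d |\<omega>|\<^sup>2 + 2 c Im \<omega>)\<close>, and the second factor vanishes exactly on \<open>\<partial>D\<close>. Off \<open>\<partial>D\<close>
  Cramer's rule yields the unique solution \<open>(hat_alpha \<omega>, hat_beta \<omega>)\<close>; on \<open>\<partial>D\<close> the system is
  inconsistent. Root branches escaping to \<open>\<alpha> = \<plusminus>\<infinity>\<close> can only converge to zeros of \<open>q\<close>, i.e. to
  \<open>\<delta>\<^sub>\<plusminus>\<close>.\<close>

text \<open>\<open>Im (u * cnj v)\<close> is, up to sign, the determinant of \<open>u\<close> and \<open>v\<close> as vectors of \<open>\<real>\<^sup>2\<close>.\<close>

lemma Im_mult_cnj_cramer:
  "of_real (Im (u * cnj v)) * r = of_real (Im (r * cnj v)) * u - of_real (Im (r * cnj u)) * v"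
  by (simp add: complex_eq_iff algebra_simps)

lemma real_combination_imp_Im_mult_cnj:
  assumes "of_real a * u - of_real b * v = r"
  shows "a * Im (u * cnj v) = Im (r * cnj v)" and "b * Im (u * cnj v) = Im (r * cnj u)"
  unfolding assms[symmetric] by (simp_all add: algebra_simps)

lemma real_combination_eq_iff:
  assumes det: "Im (u * cnj v) \<noteq> 0"
  shows "of_real a * u - of_real b * v = r \<longleftrightarrow>
    a = Im (r * cnj v) / Im (u * cnj v) \<and> b = Im (r * cnj u) / Im (u * cnj v)"
proof
  assume "of_real a * u - of_real b * v = r"
  from real_combination_imp_Im_mult_cnj[OF this] det
  show "a = Im (r * cnj v) / Im (u * cnj v) \<and> b = Im (r * cnj u) / Im (u * cnj v)"
    by (simp add: field_simps)
next
  assume "a = Im (r * cnj v) / Im (u * cnj v) \<and> b = Im (r * cnj u) / Im (u * cnj v)"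
  then have "a * Im (u * cnj v) = Im (r * cnj v)" and "b * Im (u * cnj v) = Im (r * cnj u)"
    using det by simp_all
  moreover have "of_real D * (of_real a * u - of_real b * v) =
      of_real (a * D) * u - of_real (b * D) * v" for D :: real
    by (simp add: algebra_simps)
  ultimately have "of_real (Im (u * cnj v)) * (of_real a * u - of_real b * v) =
      of_real (Im (r * cnj v)) * u - of_real (Im (r * cnj u)) * v"
    by metis
  also have "\<dots> = of_real (Im (u * cnj v)) * r"
    by (rule Im_mult_cnj_cramer[symmetric])
  finally show "of_real a * u - of_real b * v = r"
    using det by (metis mult_left_cancel of_real_eq_0_iff)
qed

lemma Im_mult_mult_cnj: "Im (z * u * cnj z) = (cmod z)^2 * Im u"
  by (simp add: mult.commute[of z] mult.assoc complex_mult_cnj cmod_power2 flip: of_real_power)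

definition damping_quadratic :: "real \<Rightarrow> real \<Rightarrow> complex \<Rightarrow> complex" where
  "damping_quadratic c d w = complex_of_real c - \<i> * complex_of_real d * w - w^2"

lemma pquart_conv_damping_quadratic:
  "pquart c d a b w =
    of_real a * damping_quadratic c d w - w^2 * damping_quadratic c d w - of_real b * w^2"
  unfolding pquart_def damping_quadratic_def by (simp add: algebra_simps)

lemma damping_quadratic_factor:
  "damping_quadratic c d w = - ((w - delta_plus c d) * (w - delta_minus c d))"
proof -
  have "(csqrt (complex_of_real (c - d^2/4)))^2 = complex_of_real (c - d^2/4)" by simp
  then show ?thesis unfolding damping_quadratic_def delta_plus_def delta_minus_def
    by (simp add: algebra_simps power2_eq_square)
qed

lemma damping_quadratic_eq_0_iff:
  "damping_quadratic c d w = 0 \<longleftrightarrow> w = delta_plus c d \<or> w = delta_minus c d"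
  by (simp add: damping_quadratic_factor)

lemma Re_damping_quadratic:
  "Re (damping_quadratic c d w) = c + d * Im w - (Re w)^2 + (Im w)^2"
  by (simp add: damping_quadratic_def power2_eq_square)

lemma Im_damping_quadratic: "Im (damping_quadratic c d w) = - Re w * (d + 2 * Im w)"
  by (simp add: damping_quadratic_def power2_eq_square algebra_simps)

lemma cmod_damping_quadratic_power2:
  "(cmod (damping_quadratic c d w))^2 =
    (- ((Re w)^2) + (Im w)^2 + d * Im w + c)^2 + (Re w)^2 * (2 * Im w + d)^2"
  unfolding cmod_power2 Re_damping_quadratic Im_damping_quadratic
  by (simp add: power2_eq_square algebra_simps)

lemma damping_quadratic_limit_root:
  assumes a: "filterlim a at_infinity sequentially" and w: "w \<longlonglongrightarrow> z"
    and roots: "\<And>k. pquart c d (a k) b (w k) = 0"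
  shows "damping_quadratic c d z = 0"
proof -
  let ?q = "damping_quadratic c d"
  have q_cont: "(\<lambda>k. ?q (w k)) \<longlonglongrightarrow> ?q z"
    unfolding damping_quadratic_def by (intro tendsto_intros w)
  have "(\<lambda>k. complex_of_real (inverse (a k))) \<longlonglongrightarrow> 0"
    using tendsto_of_real[OF filterlim_compose[OF tendsto_inverse_0 a]]
    by (simp add: o_def del: of_real_inverse)
  then have "(\<lambda>k. ((w k)^2 * (?q (w k) + of_real b)) * of_real (inverse (a k))) \<longlonglongrightarrow>
      (z^2 * (?q z + of_real b)) * 0"
    by (intro tendsto_intros q_cont w)
  moreover have "\<forall>\<^sub>F k in sequentially.
      ((w k)^2 * (?q (w k) + of_real b)) * of_real (inverse (a k)) = ?q (w k)"
    using filterlim_at_infinity_imp_eventually_ne[OF a, of 0]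
  proof eventually_elim
    case (elim k)
    have "of_real (a k) * ?q (w k) = (w k)^2 * (?q (w k) + of_real b)"
      using roots[of k] unfolding pquart_conv_damping_quadratic by (simp add: algebra_simps)
    with elim show ?case by (simp add: field_simps)
  qed
  ultimately have "(\<lambda>k. ?q (w k)) \<longlonglongrightarrow> 0"
    by (simp add: tendsto_cong)
  with q_cont show ?thesis using LIMSEQ_unique by blast
qed

lemma root_set_infinite_imp_damping_quadratic_eq_0:
  assumes "z \<in> root_set c d \<alpha> b" and "\<alpha> = \<infinity> \<or> \<alpha> = -\<infinity>"
  shows "damping_quadratic c d z = 0"
proof -
  from assms obtain a w where "filterlim a at_infinity sequentially"
    and "w \<longlonglongrightarrow> z" and "\<forall>k. pquart c d (a k) b (w k) = 0"
    using filterlim_at_top_imp_at_infinity filterlim_mono[OF _ at_bot_le_at_infinity order_refl]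
    by (auto simp: root_set_def) blast+
  then show ?thesis by (blast intro: damping_quadratic_limit_root)
qed

lemma pquart_eq_0_iff:
  "pquart c d a b w = 0 \<longleftrightarrow>
    of_real a * damping_quadratic c d w - of_real b * w^2 = w^2 * damping_quadratic c d w"
  unfolding pquart_conv_damping_quadratic by (simp add: algebra_simps)

lemma Im_damping_quadratic_mult_cnj_power2:
  "Im (damping_quadratic c d w * cnj (w^2)) = - Re w * (d * (cmod w)^2 + 2 * c * Im w)"
  unfolding cmod_power2 by (simp add: damping_quadratic_def power2_eq_square algebra_simps)

lemma pquart_eq_0_iff_hat:
  assumes d: "d > 0" and re: "Re w \<noteq> 0" and q: "damping_quadratic c d w \<noteq> 0"
  shows "pquart c d a b w = 0 \<longleftrightarrow>
    d * (cmod w)^2 + 2 * c * Im w \<noteq> 0 \<and> a = hat_alpha c d w \<and> b = hat_beta c d w"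
proof -
  define u where "u = damping_quadratic c d w"
  define den where "den = d * (cmod w)^2 + 2 * c * Im w"
  have det: "Im (u * cnj (w^2)) = - Re w * den"
    unfolding u_def den_def by (rule Im_damping_quadratic_mult_cnj_power2)
  have Im_a: "Im (w^2 * u * cnj (w^2)) = (cmod w)^4 * Im u"
    unfolding Im_mult_mult_cnj by (simp add: norm_power flip: power_mult)
  have Im_b: "Im (w^2 * u * cnj u) = (cmod u)^2 * (2 * Re w * Im w)"
    using Im_mult_mult_cnj[of u "w^2"] by (simp add: mult.commute power2_eq_square)
  have "pquart c d a b w = 0 \<longleftrightarrow> of_real a * u - of_real b * w^2 = w^2 * u"
    unfolding u_def by (rule pquart_eq_0_iff)
  also have "\<dots> \<longleftrightarrow> den \<noteq> 0 \<and> a = hat_alpha c d w \<and> b = hat_beta c d w"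
  proof (cases "den = 0")
    case True
    have "of_real a * u - of_real b * w^2 \<noteq> w^2 * u"
    proof
      assume "of_real a * u - of_real b * w^2 = w^2 * u"
      from real_combination_imp_Im_mult_cnj(2)[OF this]
      have "(cmod u)^2 * (2 * Re w * Im w) = 0"
        by (simp only: det Im_b True)
      then have "Im w = 0"
        using q re unfolding u_def by simp
      with True re d show False
        unfolding den_def cmod_power2 by simp
    qed
    with True show ?thesis by simp
  next
    case False
    then have "Im (u * cnj (w^2)) \<noteq> 0" using det re by simp
    moreover have "Im (w^2 * u * cnj (w^2)) / Im (u * cnj (w^2)) = hat_alpha c d w"
    proof -
      have "Im (w^2 * u * cnj (w^2)) / Im (u * cnj (w^2)) =
          (cmod w)^4 * Im u / (- Re w * den)"
        by (simp only: Im_a det)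
      also have "\<dots> = (2 * Im w + d) * (cmod w)^4 / den"
        using False re unfolding u_def Im_damping_quadratic by (simp add: field_simps)
      finally show ?thesis
        unfolding hat_alpha_def den_def .
    qed
    moreover have "Im (w^2 * u * cnj u) / Im (u * cnj (w^2)) = hat_beta c d w"
    proof -
      have "Im (w^2 * u * cnj u) / Im (u * cnj (w^2)) =
          (cmod u)^2 * (2 * Re w * Im w) / (- Re w * den)"
        by (simp only: Im_b det)
      also have "\<dots> = -2 * Im w * (cmod u)^2 / den"
        using False re by (simp add: field_simps)
      finally show ?thesis
        unfolding hat_beta_def den_def u_def cmod_damping_quadratic_power2 .
    qed
    ultimately show ?thesis
      using False by (simp add: real_combination_eq_iff)
  qed
  finally show ?thesis unfolding den_def .
qed

lemma frontier_Dset: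
  assumes c: "c \<ge> 0" and d: "d > 0" and w: "w \<noteq> 0"
  shows "w \<in> frontier (Dset c d) \<longleftrightarrow> d * (cmod w)^2 + 2 * c * Im w = 0"
proof (cases "c = 0")
  case True
  then show ?thesis
    using d w by (simp add: Dset_def)
next
  case False
  with c d have r: "c / d > 0" by simp
  have "Dset c d = ball (- (\<i> * of_real (c/d))) (c/d)"
    unfolding Dset_def ball_def dist_norm by (simp add: norm_minus_commute add.commute)
  then have "w \<in> frontier (Dset c d) \<longleftrightarrow> (cmod (w + \<i> * of_real (c/d)))^2 = (c/d)^2"
    using r by (simp add: sphere_def dist_norm norm_minus_commute add.commute power2_eq_iff_nonneg)
  also have "\<dots> \<longleftrightarrow> (cmod w)^2 + 2 * (c/d) * Im w = 0"
    unfolding cmod_power2 by (simp add: power2_eq_square algebra_simps)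
  also have "(cmod w)^2 + 2 * (c/d) * Im w = (d * (cmod w)^2 + 2 * c * Im w) / d"
    using d by (simp add: field_simps)
  finally show ?thesis
    using d by simp
qed

theorem proposition2p6:
  fixes c d :: real and WA WB :: "real set" and \<omega> :: complex
  assumes "c \<ge> 0" and "d > 0"
    and "WA \<noteq> {}" and "convex WA"
    and "WB \<noteq> {}" and "convex WB" and "bounded WB" and "WB \<noteq> {0}"
    and "Re \<omega> \<noteq> 0" and "\<omega> \<noteq> delta_plus c d" and "\<omega> \<noteq> delta_minus c d"
  shows "\<omega> \<in> W_Omega c d WA WB \<longleftrightarrow>
           \<omega> \<notin> frontier (Dset c d) \<and> hat_beta c d \<omega> \<in> closure WB \<and>
           ereal (hat_alpha c d \<omega>) \<in> closure (ereal ` WA)"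
proof -
  have q: "damping_quadratic c d \<omega> \<noteq> 0"
    using assms(10,11) by (simp add: damping_quadratic_eq_0_iff)
  have on_frontier: "\<omega> \<in> frontier (Dset c d) \<longleftrightarrow> d * (cmod \<omega>)^2 + 2 * c * Im \<omega> = 0"
    using assms(1,2,9) by (intro frontier_Dset) auto
  have roots: "\<omega> \<in> root_set c d \<alpha> \<beta> \<longleftrightarrow>
      \<omega> \<notin> frontier (Dset c d) \<and> \<alpha> = ereal (hat_alpha c d \<omega>) \<and> \<beta> = hat_beta c d \<omega>"
    for \<alpha> \<beta>
  proof (cases \<alpha>)
    case (real a)
    then show ?thesis
      using pquart_eq_0_iff_hat[OF assms(2,9) q] on_frontier by (simp add: root_set_def)
  qed (use q root_set_infinite_imp_damping_quadratic_eq_0 in auto)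
  show ?thesis
    unfolding W_Omega_def by (auto simp: roots)
qed

end
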